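(* Let $f\colon [0,1]^2\to\mathbb{R}$ be a continuous function which is monotone, i.e. for every $t\in\mathbb{R}$ the level set $\{x\in[0,1]^2 : f(x)=t\}$ is connected. Let $S$ be the critical set of $f$ and $E^*$ the set defined in the context. Then $f$ has the relaxed Sard property, i.e. $f_\#(\mathbf{1}_S\mathcal{L}^2)\perp\mathcal{L}^1$, if and only if $f$ has the weak Sard property, i.e. $f_\#(\mathbf{1}_{S\cap E^*}\mathcal{L}^2)\perp\mathcal{L}^1$.
   Context: $\mathcal{L}^d$ denotes Lebesgue measure on $\mathbb{R}^d$, $\mathcal{H}^1$ the one-dimensional Hausdorff measure, $\mathbf{1}_A$ the indicator function of $A$, $f_\#\mu$ the pushforward (image) of a measure $\mu$ under $f$, and $\mu\perp\nu$ means $\mu$ and $\nu$ are mutually singular. The critical set $S$ of $f$ is the set of all points $x\in[0,1]^2$ at which $f$ is either not differentiable or has $\nabla f(x)=0$. For $t\in\mathbb{R}$ let $E_t=f^{-1}(t)$ and let $E_t^*$ be the union of all connected components of $E_t$ with strictly positive $\mathcal{H}^1$-measure; $E^*:=\bigcup_{t\in\mathbb{R}}E_t^*$ (a Borel set since $f$ is continuous). *)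

theory Defs
  imports "HOL-Analysis.Analysis"
begin

definition unit_square :: "(real \<times> real) set" where
  "unit_square = cbox (0,0) (1,1)"

text \<open>One-dimensional Hausdorff (outer) measure, normalised so that it agrees with
  length on segments: H^1(A) = sup_{d>0} inf { sum_i diam C_i : A \<subseteq> \<Union>_i C_i, diam C_i \<le> d }.
  Covering sets are required to be bounded (Isabelle's diameter of an unbounded set is 0).\<close>
definition hausdorff1 :: "'a::metric_space set \<Rightarrow> ennreal" where
  "hausdorff1 A =
     (SUP d\<in>{0<..}. INF C\<in>{C :: nat \<Rightarrow> 'a set. A \<subseteq> (\<Union>i. C i) \<and>
                                 (\<forall>i. bounded (C i) \<and> diameter (C i) \<le> d)}.
                     (\<Sum>i. ennreal (diameter (C i))))"

definition critical_set :: "(real \<times> real \<Rightarrow> real) \<Rightarrow> (real \<times> real) set" where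
  "critical_set f = {x \<in> unit_square. \<not> f differentiable (at x) \<or> (f has_derivative (\<lambda>h. 0)) (at x)}"

definition level_set :: "(real \<times> real \<Rightarrow> real) \<Rightarrow> real \<Rightarrow> (real \<times> real) set" where
  "level_set f t = {x \<in> unit_square. f x = t}"

definition level_set_star :: "(real \<times> real \<Rightarrow> real) \<Rightarrow> real \<Rightarrow> (real \<times> real) set" where
  "level_set_star f t = \<Union>{connected_component_set (level_set f t) x | x.
        x \<in> level_set f t \<and> hausdorff1 (connected_component_set (level_set f t) x) > 0}"

definition E_star :: "(real \<times> real \<Rightarrow> real) \<Rightarrow> (real \<times> real) set" where
  "E_star f = (\<Union>t. level_set_star f t)"

definition pushforward_restr :: "(real \<times> real \<Rightarrow> real) \<Rightarrow> (real \<times> real) set \<Rightarrow> real measure" where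
  "pushforward_restr f A = distr (density (restrict_space lebesgue unit_square) (indicator A)) borel f"

definition mutually_singular :: "'a measure \<Rightarrow> 'a measure \<Rightarrow> bool" where
  "mutually_singular M N \<longleftrightarrow> (\<exists>A\<in>sets M. emeasure M A = 0 \<and> emeasure N (space N - A) = 0)"

end

theory Submission
  imports Defs
begin

text \<open>
  A level set of f is connected, so it is a single connected component; if it contains two
  points a and b, the map dist a sends it onto the segment [0, dist a b], hence it has
  positive H^1-measure.  So every point of the square outside E* is the only point of its
  level set.  Since the square stays connected after removing a point, such a point is a
  global minimum or maximum of f, so there are at most two of them.  Thus S and S \<inter> E*
  differ by a finite set, and the two push-forward measures are in fact equal.
\<close>

lemma dist_le_two_suminf_diameter_cover:
  fixes C :: "'a::metric_space set" and D :: "nat \<Rightarrow> 'a set"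
  assumes conn: "connected C" and a: "a \<in> C" and b: "b \<in> C"
    and cover: "C \<subseteq> (\<Union>i. D i)" and bounded: "\<And>i. bounded (D i)"
  shows "ennreal (dist a b) \<le> 2 * (\<Sum>i. ennreal (diameter (D i)))"
proof -
  define g where "g = dist a"
  define c where "c i = (SOME c. c \<in> D i)" for i
  define I where "I i = {g (c i) - diameter (D i) .. g (c i) + diameter (D i)}" for i
  have "connected (g ` C)"
    unfolding g_def by (intro connected_continuous_image conn continuous_intros)
  moreover have "0 \<in> g ` C" "dist a b \<in> g ` C"
    using a b unfolding g_def by force+
  ultimately have segment: "{0..dist a b} \<subseteq> g ` C"
    by (auto intro: connectedD_interval)
  have "g y \<in> I i" if y: "y \<in> D i" for y i
  proof -
    have "c i \<in> D i" using y unfolding c_def by (metis someI)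
    then have "dist y (c i) \<le> diameter (D i)"
      by (rule diameter_bounded_bound[OF bounded y])
    moreover have "\<bar>g y - g (c i)\<bar> \<le> dist y (c i)"
      unfolding g_def using abs_dist_diff_le[of y a "c i"] by (simp add: dist_commute)
    ultimately show ?thesis unfolding I_def by auto
  qed
  then have "{0..dist a b} \<subseteq> (\<Union>i. I i)"
    using segment cover by (smt (verit) UN_iff imageE subset_iff)
  then have "emeasure lborel {0..dist a b} \<le> emeasure lborel (\<Union>i. I i)"
    by (intro emeasure_mono) (auto simp: I_def)
  also have "\<dots> \<le> (\<Sum>i. emeasure lborel (I i))"
    by (intro emeasure_subadditive_countably) (auto simp: I_def)
  also have "\<dots> = (\<Sum>i. 2 * ennreal (diameter (D i)))"
  proof (rule suminf_cong)
    fix i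
    have "0 \<le> diameter (D i)" using diameter_ge_0[OF bounded] .
    then show "emeasure lborel (I i) = 2 * ennreal (diameter (D i))"
      unfolding I_def by (simp add: ennreal_mult)
  qed
  also have "\<dots> = 2 * (\<Sum>i. ennreal (diameter (D i)))" by simp
  finally show ?thesis by simp
qed

lemma hausdorff1_connected_pos:
  fixes C :: "'a::metric_space set"
  assumes conn: "connected C" and a: "a \<in> C" and b: "b \<in> C" and "a \<noteq> b"
  shows "hausdorff1 C > 0"
proof -
  let ?covers = "{D :: nat \<Rightarrow> 'a set. C \<subseteq> (\<Union>i. D i) \<and> (\<forall>i. bounded (D i) \<and> diameter (D i) \<le> 1)}"
  have "ennreal (dist a b) / 2 \<le> (INF D\<in>?covers. (\<Sum>i. ennreal (diameter (D i))))"
  proof (rule INF_greatest)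
    fix D assume "D \<in> ?covers"
    then have "ennreal (dist a b) \<le> 2 * (\<Sum>i. ennreal (diameter (D i)))"
      by (intro dist_le_two_suminf_diameter_cover[OF conn a b]) auto
    then show "ennreal (dist a b) / 2 \<le> (\<Sum>i. ennreal (diameter (D i)))"
      by (intro divide_le_posI_ennreal) auto
  qed
  also have "\<dots> \<le> hausdorff1 C"
    unfolding hausdorff1_def by (rule SUP_upper2[of 1]) auto
  finally have "ennreal (dist a b) / 2 \<le> hausdorff1 C" .
  moreover have "0 < ennreal (dist a b) / 2"
    using \<open>a \<noteq> b\<close> by (simp add: ennreal_zero_less_divide)
  ultimately show ?thesis by order
qed

lemma connected_unit_square_minus_point: "connected (unit_square - {x})"
proof (rule connected_punctured_convex)
  show "convex unit_square" unfolding unit_square_def by (rule convex_box)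
  have "interior unit_square \<noteq> {}" unfolding unit_square_def interior_cbox
    by (simp add: box_eq_empty inner_Pair_0 Basis_prod_def)
  then show "aff_dim unit_square \<noteq> 1"
    by (simp add: aff_dim_nonempty_interior)
qed

lemma level_set_eq_singleton_if_notin_E_star:
  assumes monotone: "\<And>t. connected {x \<in> unit_square. f x = t}"
    and x: "x \<in> unit_square" "x \<notin> E_star f"
  shows "level_set f (f x) = {x}"
proof (rule ccontr)
  define L where "L = level_set f (f x)"
  have conn: "connected L" unfolding L_def level_set_def by (rule monotone)
  have xL: "x \<in> L" unfolding L_def level_set_def using x by auto
  assume "level_set f (f x) \<noteq> {x}"
  then obtain y where "y \<in> L" "y \<noteq> x" using xL unfolding L_def by auto
  then have "hausdorff1 (connected_component_set L x) > 0"
    using hausdorff1_connected_pos[OF conn xL] connected_component_eq_self[OF conn xL] by auto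
  then have "connected_component_set L x \<subseteq> level_set_star f (f x)"
    unfolding level_set_star_def L_def using xL L_def by blast
  then have "x \<in> E_star f"
    unfolding E_star_def using xL by (auto intro: connected_component_refl)
  with x show False by simp
qed

lemma singleton_level_set_imp_extremum:
  fixes f :: "'a::topological_space \<Rightarrow> real"
  assumes cont: "continuous_on S f" and conn: "connected (S - {x})"
    and level: "{y \<in> S. f y = f x} = {x}"
  shows "(\<forall>y\<in>S. f x \<le> f y) \<or> (\<forall>y\<in>S. f y \<le> f x)"
proof (rule ccontr)
  assume "\<not> ?thesis"
  then obtain y1 y2 where y: "y1 \<in> S" "y2 \<in> S" "f y1 < f x" "f x < f y2"
    by (auto simp: not_le)
  have "connected (f ` (S - {x}))"
    by (intro connected_continuous_image conn continuous_on_subset[OF cont]) auto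
  moreover have "f y1 \<in> f ` (S - {x})" "f y2 \<in> f ` (S - {x})"
    using y by auto
  ultimately have "f x \<in> f ` (S - {x})"
    by (rule connectedD_interval) (use y in auto)
  then obtain z where "z \<in> S" "z \<noteq> x" "f z = f x"
    by (metis DiffE imageE singletonI)
  then have "z \<in> {y \<in> S. f y = f x}" by simp
  with level \<open>z \<noteq> x\<close> show False by simp
qed

lemma finite_singleton_level_sets:
  fixes f :: "'a::topological_space \<Rightarrow> real"
  assumes cont: "continuous_on S f" and conn: "\<And>x. connected (S - {x})"
  shows "finite {x \<in> S. {y \<in> S. f y = f x} = {x}}" (is "finite ?N")
proof (rule finite_imageD)
  have "f x \<in> {Inf (f ` S), Sup (f ` S)}" if "x \<in> ?N" for x
  proof -
    from that have "x \<in> S" and level: "{y \<in> S. f y = f x} = {x}"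
      by (simp_all only: mem_Collect_eq)
    from singleton_level_set_imp_extremum[OF cont conn level] show ?thesis
    proof
      assume "\<forall>y\<in>S. f x \<le> f y"
      then have "Inf (f ` S) = f x" using \<open>x \<in> S\<close> by (intro cInf_eq_minimum) auto
      then show ?thesis by simp
    next
      assume "\<forall>y\<in>S. f y \<le> f x"
      then have "Sup (f ` S) = f x" using \<open>x \<in> S\<close> by (intro cSup_eq_maximum) auto
      then show ?thesis by simp
    qed
  qed
  then have "f ` ?N \<subseteq> {Inf (f ` S), Sup (f ` S)}"
    by (rule image_subsetI)
  then show "finite (f ` ?N)"
    by (rule finite_subset) simp
  show "inj_on f ?N"
  proof (rule inj_onI)
    fix x z assume x: "x \<in> ?N" and z: "z \<in> ?N" and "f x = f z"
    from z have "z \<in> S" by (simp only: mem_Collect_eq)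
    with \<open>f x = f z\<close> have "z \<in> {y \<in> S. f y = f x}" by simp
    also from x have "\<dots> = {x}" by (simp only: mem_Collect_eq)
    finally show "x = z" by simp
  qed
qed

lemma density_cong_AE_nonmeasurable:
  assumes "AE x in M. f x = g x"
  shows "density M f = density M g"
proof -
  have "(\<integral>\<^sup>+ x. f x * indicator A x \<partial>M) = (\<integral>\<^sup>+ x. g x * indicator A x \<partial>M)" for A
    by (rule nn_integral_cong_AE) (use assms in eventually_elim, simp)
  then show ?thesis unfolding density_def by simp
qed

lemma pushforward_restr_cong_null:
  assumes "(A - B) \<union> (B - A) \<subseteq> N" and "N \<in> null_sets lebesgue"
  shows "pushforward_restr f A = pushforward_restr f B"
proof -
  have "AE x in lebesgue. x \<notin> N"
    using assms(2) by (rule AE_not_in)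
  then have "AE x in lebesgue. x \<in> unit_square \<longrightarrow>
      (indicator A x :: ennreal) = indicator B x"
    by eventually_elim (use assms(1) in \<open>auto simp: indicator_def\<close>)
  then have "AE x in restrict_space lebesgue unit_square. (indicator A x :: ennreal) = indicator B x"
    by (subst AE_restrict_space_iff) (auto simp: unit_square_def)
  then show ?thesis
    unfolding pushforward_restr_def by (simp only: density_cong_AE_nonmeasurable)
qed

theorem theorem1:
  fixes f :: "real \<times> real \<Rightarrow> real"
  assumes cont: "continuous_on unit_square f"
    and monotone: "\<And>t. connected {x \<in> unit_square. f x = t}"
  shows "mutually_singular (pushforward_restr f (critical_set f)) lborel \<longleftrightarrow>
         mutually_singular (pushforward_restr f (critical_set f \<inter> E_star f)) lborel"
proof -
  let ?N = "{x \<in> unit_square. {y \<in> unit_square. f y = f x} = {x}}"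
  have "finite ?N"
    using cont connected_unit_square_minus_point by (rule finite_singleton_level_sets)
  then have "?N \<in> null_sets lebesgue"
    by (intro null_sets_completionI finite_imp_null_set_lborel)
  moreover have "x \<in> ?N" if "x \<in> critical_set f" "x \<notin> E_star f" for x
    using that level_set_eq_singleton_if_notin_E_star[OF monotone, of x]
    unfolding critical_set_def level_set_def by blast
  ultimately have "pushforward_restr f (critical_set f) = pushforward_restr f (critical_set f \<inter> E_star f)"
    by (intro pushforward_restr_cong_null[of _ _ ?N]) blast+
  then show ?thesis by simp
qed

end
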